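(* Let $T_0=pD^2+q_0D+r_0$ be a second-order rational operator, let $\phi_1,\dots,\phi_n$ be quasi-rational functions with $T_0\phi_k=\lambda_k\phi_k$ for pairwise distinct constants $\lambda_1,\dots,\lambda_n$, and let $b_1,\dots,b_n$ be nonzero rational functions. For $k=1,\dots,n$ set $\sigma_k=\sum_{j=1}^k (\log b_j)'$, $\upsilon_k=\phi_{(1,\dots,k)}'/\phi_{(1,\dots,k)}$, and $\sigma_0=\upsilon_0=0$; $q_k=q_0+kp'-2p\sigma_k$, $r_k=r_0+kq_0'+\tfrac12k(k-1)p''+\upsilon_kp'-\sigma_k(q_0+kp')+(\sigma_k^2-\sigma_k'+2\upsilon_k')p$, $w_k=\sigma_{k-1}+\upsilon_k-\upsilon_{k-1}$, and define $T_k=pD^2+q_kD+r_k$, $A_k=b_k(D-w_k)$. Then $A_kT_{k-1}=T_kA_k$ for all $k=1,\dots,n$; i.e. $T_0\to T_1\to\cdots\to T_n$ is an $n$-step rational Darboux transformation.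
   Context: $D=d/dz$, primes denote $d/dz$. A rational operator has rational coefficients; a function is quasi-rational if its logarithmic derivative is rational. $\phi_{(i_1,\dots,i_k)}:=\mathrm{Wr}[\phi_{i_1},\dots,\phi_{i_k}]$ denotes the Wronskian determinant. An $n$-step rational Darboux transformation $T_0\to\cdots\to T_n$ means there are first-order rational operators $A_k$ with $A_kT_{k-1}=T_kA_k$. *)

theory Defs
  imports "Jordan_Normal_Form.Determinant" "HOL-Computational_Algebra.Polynomial"
begin

text \<open>Abstract setting: a field K (type 'a) with a derivation d (playing the role of D = d/dz),
  an embedding c of the complex constants, and an element z with d z = 1.
  Rational functions are the elements P(z)/Q(z) with complex polynomials P, Q.\<close>

definition diff_field_over :: "('a::field \<Rightarrow> 'a) \<Rightarrow> (complex \<Rightarrow> 'a) \<Rightarrow> 'a \<Rightarrow> bool" where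
  "diff_field_over d c z \<longleftrightarrow>
     (\<forall>x y. d (x + y) = d x + d y) \<and>
     (\<forall>x y. d (x * y) = d x * y + x * d y) \<and>
     (\<forall>a b. c (a + b) = c a + c b) \<and>
     (\<forall>a b. c (a * b) = c a * c b) \<and>
     c 1 = 1 \<and>
     (\<forall>a. d (c a) = 0) \<and>
     d z = 1"

definition is_rational :: "(complex \<Rightarrow> 'a::field) \<Rightarrow> 'a \<Rightarrow> 'a \<Rightarrow> bool" where
  "is_rational c z f \<longleftrightarrow>
     (\<exists>P Q :: complex poly. poly (map_poly c Q) z \<noteq> 0 \<and>
        f = poly (map_poly c P) z / poly (map_poly c Q) z)"

definition quasi_rational :: "('a::field \<Rightarrow> 'a) \<Rightarrow> (complex \<Rightarrow> 'a) \<Rightarrow> 'a \<Rightarrow> 'a \<Rightarrow> bool" where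
  "quasi_rational d c z f \<longleftrightarrow> f \<noteq> 0 \<and> is_rational c z (d f / f)"

definition op2 :: "('a::field \<Rightarrow> 'a) \<Rightarrow> 'a \<Rightarrow> 'a \<Rightarrow> 'a \<Rightarrow> 'a \<Rightarrow> 'a" where
  "op2 d p q r y = p * d (d y) + q * d y + r * y"

definition op1 :: "('a::field \<Rightarrow> 'a) \<Rightarrow> 'a \<Rightarrow> 'a \<Rightarrow> 'a \<Rightarrow> 'a" where
  "op1 d b w y = b * (d y - w * y)"

text \<open>Wronskian Wr[f_1,...,f_k] (indices 1..k), i.e. phi_(1,...,k).\<close>
definition wronskian :: "('a::field \<Rightarrow> 'a) \<Rightarrow> (nat \<Rightarrow> 'a) \<Rightarrow> nat \<Rightarrow> 'a" where
  "wronskian d f k = det (mat k k (\<lambda>(i, j). (d ^^ i) (f (Suc j))))"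

definition sigma :: "('a::field \<Rightarrow> 'a) \<Rightarrow> (nat \<Rightarrow> 'a) \<Rightarrow> nat \<Rightarrow> 'a" where
  "sigma d b k = (\<Sum>j = 1..k. d (b j) / b j)"

definition upsilon :: "('a::field \<Rightarrow> 'a) \<Rightarrow> (nat \<Rightarrow> 'a) \<Rightarrow> nat \<Rightarrow> 'a" where
  "upsilon d f k = d (wronskian d f k) / wronskian d f k"

definition qk :: "('a::field \<Rightarrow> 'a) \<Rightarrow> 'a \<Rightarrow> 'a \<Rightarrow> (nat \<Rightarrow> 'a) \<Rightarrow> nat \<Rightarrow> 'a" where
  "qk d p q0 b k = q0 + of_nat k * d p - 2 * p * sigma d b k"

definition rk :: "('a::field \<Rightarrow> 'a) \<Rightarrow> 'a \<Rightarrow> 'a \<Rightarrow> 'a \<Rightarrow> (nat \<Rightarrow> 'a) \<Rightarrow> (nat \<Rightarrow> 'a) \<Rightarrow> nat \<Rightarrow> 'a" where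
  "rk d p q0 r0 b f k =
     r0 + of_nat k * d q0 + (1/2) * of_nat k * (of_nat k - 1) * d (d p)
     + upsilon d f k * d p - sigma d b k * (q0 + of_nat k * d p)
     + ((sigma d b k)^2 - d (sigma d b k) + 2 * d (upsilon d f k)) * p"

definition wk :: "('a::field \<Rightarrow> 'a) \<Rightarrow> (nat \<Rightarrow> 'a) \<Rightarrow> (nat \<Rightarrow> 'a) \<Rightarrow> nat \<Rightarrow> 'a" where
  "wk d b f k = sigma d b (k - 1) + upsilon d f k - upsilon d f (k - 1)"

end

theory Submission
  imports Defs
begin

text \<open>Proof idea (Crum). Put F_{0,j} = phi_j and
  F_{m+1,j} = F_{m,j}' - (F_{m,m+1}'/F_{m,m+1}) F_{m,j} (the function crum below). Row reduction
  shows that the Wronskian phi_(1,...,m) is the product of the F_{i,i+1}, i < m; hence w_{m+1} is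
  the logarithmic derivative of psi_m = b_1...b_m F_{m,m+1}. By induction on m, the functions
  b_1...b_m F_{m,j} (j > m) are non-zero eigenfunctions of T_m for lambda_j. The step from m to
  m+1 is the one-step Darboux transformation b (D - psi'/psi) at the eigenfunction psi = psi_m:
  it intertwines T_m with the operator whose coefficients are q_{m+1} and r_{m+1}, maps the
  remaining eigenfunctions to those of level m+1, and kills none of them because its kernel is
  spanned by psi. Rationality follows because the logarithmic derivatives of the F_{m,j} stay
  rational.\<close>

locale diff_field =
  fixes d :: "'a::field \<Rightarrow> 'a" and c :: "complex \<Rightarrow> 'a" and z :: 'a
  assumes diff_field_over: "diff_field_over d c z"
begin

abbreviation logderiv :: "'a \<Rightarrow> 'a" where
  "logderiv x \<equiv> d x / x"

lemma d_add [simp]: "d (x + y) = d x + d y"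
  using diff_field_over by (simp add: diff_field_over_def)

lemma d_mult [simp]: "d (x * y) = d x * y + x * d y"
  using diff_field_over by (simp add: diff_field_over_def)

lemma c_add: "c (a + b) = c a + c b"
  using diff_field_over by (simp add: diff_field_over_def)

lemma c_mult: "c (a * b) = c a * c b"
  using diff_field_over by (simp add: diff_field_over_def)

lemma c_one [simp]: "c 1 = 1"
  using diff_field_over by (simp add: diff_field_over_def)

lemma d_c [simp]: "d (c a) = 0"
  using diff_field_over by (simp add: diff_field_over_def)

lemma d_z [simp]: "d z = 1"
  using diff_field_over by (simp add: diff_field_over_def)

lemma d_zero [simp]: "d 0 = 0"
  using d_add[of 0 0] by (metis add_0 add_cancel_right_right)

lemma d_one [simp]: "d 1 = 0"
  using d_c[of 1] by simp

lemma d_uminus [simp]: "d (- x) = - d x"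
  using d_add[of x "- x"] by (simp add: eq_neg_iff_add_eq_0 add.commute)

lemma d_diff [simp]: "d (x - y) = d x - d y"
  using d_add[of x "- y"] by simp

lemma d_of_nat [simp]: "d (of_nat n) = 0"
  by (induction n) auto

lemma d_numeral [simp]: "d (numeral k) = 0"
  using d_of_nat[of "numeral k"] by simp

lemma d_divide:
  assumes "y \<noteq> 0"
  shows "d (x / y) = (d x * y - x * d y) / y\<^sup>2"
proof -
  have "d x = d (x / y) * y + (x / y) * d y"
    using d_mult[of "x / y" y] assms by simp
  with assms show ?thesis
    by (simp add: field_simps power2_eq_square)
qed

lemma d_sum: "d (sum f A) = (\<Sum>i\<in>A. d (f i))"
  by (induction A rule: infinite_finite_induct) auto

lemma funpow_d_zero [simp]: "(d ^^ n) 0 = 0"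
  by (induction n) auto

lemma funpow_d_diff: "(d ^^ n) (x - y) = (d ^^ n) x - (d ^^ n) y"
  by (induction n) auto

lemma logderiv_mult:
  assumes "x \<noteq> 0" "y \<noteq> 0"
  shows "logderiv (x * y) = logderiv x + logderiv y"
  using assms by (simp add: field_simps)

lemma logderiv_prod:
  assumes "finite A" "\<And>i. i \<in> A \<Longrightarrow> f i \<noteq> 0"
  shows "logderiv (prod f A) = (\<Sum>i\<in>A. logderiv (f i))"
  using assms
proof (induction A rule: finite_induct)
  case (insert x A)
  then have "logderiv (f x * prod f A) = logderiv (f x) + logderiv (prod f A)"
    by (intro logderiv_mult) auto
  with insert show ?case by simp
qed simp

lemma c_zero [simp]: "c 0 = 0"
  using c_add[of 0 0] by (metis add_0 add_cancel_right_right)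

lemma c_uminus: "c (- a) = - c a"
  using c_add[of a "- a"] by (simp add: eq_neg_iff_add_eq_0 add.commute)

lemma c_of_nat: "c (of_nat n) = of_nat n"
  by (induction n) (simp_all add: c_add)

lemma c_inj:
  assumes "c a = c b"
  shows "a = b"
proof (rule ccontr)
  assume "a \<noteq> b"
  then have "c (a - b) * c (1 / (a - b)) = 1"
    by (metis c_mult c_one divide_self_if times_divide_eq_right right_minus_eq mult_1_right)
  moreover have "c (a - b) = 0"
    using assms c_add[of a "- b"] c_uminus[of b] by simp
  ultimately show False by simp
qed

lemma of_nat_eq_0_iff: "(of_nat n :: 'a) = 0 \<longleftrightarrow> n = 0"
proof
  assume "(of_nat n :: 'a) = 0"
  then have "c (of_nat n) = c 0"
    by (simp add: c_of_nat)
  then show "n = 0"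
    using c_inj of_nat_eq_0_iff by blast
qed simp

section \<open>Wronskians and the Crum chain\<close>

fun leibniz_coeff :: "'a \<Rightarrow> nat \<Rightarrow> nat \<Rightarrow> 'a" where
  "leibniz_coeff a 0 l = (if l = 0 then a else 0)"
| "leibniz_coeff a (Suc n) l = d (leibniz_coeff a n l) + (if l = 0 then 0 else leibniz_coeff a n (l - 1))"

lemma leibniz_coeff_eq_0: "n < l \<Longrightarrow> leibniz_coeff a n l = 0"
  by (induction n arbitrary: l) auto

lemma funpow_d_mult: "(d ^^ n) (a * y) = (\<Sum>l<Suc n. leibniz_coeff a n l * (d ^^ l) y)"
proof (induction n)
  case (Suc n)
  have "(d ^^ Suc n) (a * y)
      = (\<Sum>l<Suc n. d (leibniz_coeff a n l) * (d ^^ l) y) + (\<Sum>l<Suc n. leibniz_coeff a n l * (d ^^ Suc l) y)"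
    using Suc by (simp add: d_sum sum.distrib)
  also have "(\<Sum>l<Suc n. d (leibniz_coeff a n l) * (d ^^ l) y)
      = (\<Sum>l<Suc (Suc n). d (leibniz_coeff a n l) * (d ^^ l) y)"
    by (simp add: leibniz_coeff_eq_0)
  also have "(\<Sum>l<Suc n. leibniz_coeff a n l * (d ^^ Suc l) y)
      = (\<Sum>l<Suc (Suc n). (if l = 0 then 0 else leibniz_coeff a n (l - 1)) * (d ^^ l) y)"
    by (subst sum.lessThan_Suc_shift) simp
  finally show ?case
    by (simp add: sum.distrib[symmetric] algebra_simps)
qed simp

definition wronski_mat :: "nat \<Rightarrow> (nat \<Rightarrow> 'a) \<Rightarrow> nat \<Rightarrow> 'a mat" where
  "wronski_mat s f k = mat k k (\<lambda>(i, j). (d ^^ i) (f (s + j)))"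

definition elim_mat :: "'a \<Rightarrow> nat \<Rightarrow> 'a mat" where
  "elim_mat a k = mat k k (\<lambda>(i, l).
     if i = 0 then (if l = 0 then 1 else 0)
     else if l = i then 1 else if l < i then - leibniz_coeff a (i - 1) l else 0)"

lemma elim_mat_carrier [simp]: "elim_mat a k \<in> carrier_mat k k"
  by (simp add: elim_mat_def)

lemma wronski_mat_carrier [simp]: "wronski_mat s f k \<in> carrier_mat k k"
  by (simp add: wronski_mat_def)

lemma det_elim_mat: "det (elim_mat a k) = 1"
proof -
  have "det (elim_mat a k) = prod_list (diag_mat (elim_mat a k))"
    by (rule det_lower_triangular[of k]) (auto simp: elim_mat_def)
  also have "diag_mat (elim_mat a k) = map (\<lambda>i. 1) [0..<k]"
    by (auto simp: diag_mat_def elim_mat_def)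
  finally show ?thesis
    by (simp add: map_replicate_const)
qed

lemma elim_mat_mult_wronski_mat_row_0:
  assumes "j < k"
  shows "(elim_mat a k * wronski_mat s f k) $$ (0, j) = f (s + j)"
proof -
  have "(elim_mat a k * wronski_mat s f k) $$ (0, j)
      = (\<Sum>l\<in>{0..<k}. (if l = 0 then 1 else 0) * (d ^^ l) (f (s + j)))"
    using assms by (auto simp: elim_mat_def wronski_mat_def scalar_prod_def intro!: sum.cong)
  also have "\<dots> = (\<Sum>l\<in>{0..<k}. if l = 0 then (d ^^ l) (f (s + j)) else 0)"
    by (rule sum.cong) auto
  also have "\<dots> = f (s + j)"
    using assms by (simp add: sum.delta)
  finally show ?thesis .
qed

lemma elim_mat_mult_wronski_mat_row_Suc:
  assumes "i < k" "j < Suc k"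
  shows "(elim_mat a (Suc k) * wronski_mat s f (Suc k)) $$ (Suc i, j)
       = (d ^^ i) (d (f (s + j)) - a * f (s + j))"
proof -
  let ?x = "f (s + j)"
  have "(elim_mat a (Suc k) * wronski_mat s f (Suc k)) $$ (Suc i, j)
      = (\<Sum>l<Suc k. (if l = Suc i then (d ^^ l) ?x else 0)
          - (if l < Suc i then leibniz_coeff a i l * (d ^^ l) ?x else 0))"
    using assms by (auto simp: elim_mat_def wronski_mat_def scalar_prod_def lessThan_atLeast0
        intro!: sum.cong)
  also have "\<dots> = (\<Sum>l<Suc k. if l = Suc i then (d ^^ l) ?x else 0)
      - (\<Sum>l<Suc k. if l < Suc i then leibniz_coeff a i l * (d ^^ l) ?x else 0)"
    by (rule sum_subtractf)
  also have "\<dots> = (d ^^ Suc i) ?x - (\<Sum>l<Suc i. leibniz_coeff a i l * (d ^^ l) ?x)"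
  proof -
    have "(\<Sum>l<Suc k. if l < Suc i then leibniz_coeff a i l * (d ^^ l) ?x else 0)
        = (\<Sum>l\<in>{..<Suc k} \<inter> {l. l < Suc i}. leibniz_coeff a i l * (d ^^ l) ?x)"
      by (simp add: sum.inter_restrict)
    also have "{..<Suc k} \<inter> {l. l < Suc i} = {..<Suc i}"
      using assms by auto
    finally show ?thesis
      using assms by (simp add: sum.delta)
  qed
  also have "\<dots> = (d ^^ i) (d ?x) - (d ^^ i) (a * ?x)"
    by (simp add: funpow_d_mult funpow_Suc_right del: funpow.simps)
  also have "\<dots> = (d ^^ i) (d ?x - a * ?x)"
    by (simp add: funpow_d_diff)
  finally show ?thesis .
qed

text \<open>The unitriangular row operations of elim_mat turn row i+1 into the i-th derivative of
  f' - (f_s'/f_s) f, which vanishes at f_s; then expand along the first column.\<close>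
lemma det_wronski_mat_Suc:
  assumes "f s \<noteq> 0"
  shows "det (wronski_mat s f (Suc k))
       = f s * det (wronski_mat (Suc s) (\<lambda>j. d (f j) - logderiv (f s) * f j) k)"
proof -
  define a where "a = logderiv (f s)"
  define N where "N = elim_mat a (Suc k) * wronski_mat s f (Suc k)"
  have N: "N \<in> carrier_mat (Suc k) (Suc k)"
    unfolding N_def by (rule mult_carrier_mat[of _ "Suc k" "Suc k"]) simp_all
  have N_Suc: "N $$ (Suc i, j) = (d ^^ i) (d (f (s + j)) - a * f (s + j))" if "i < k" "j < Suc k" for i j
    using that by (simp add: N_def elim_mat_mult_wronski_mat_row_Suc)
  have "det (wronski_mat s f (Suc k)) = det N"
    using det_mult[of "elim_mat a (Suc k)" "Suc k" "wronski_mat s f (Suc k)"]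
    by (simp add: N_def det_elim_mat)
  also have "\<dots> = (\<Sum>i<Suc k. N $$ (i, 0) * cofactor N i 0)"
    by (rule laplace_expansion_column[OF N]) simp
  also have "\<dots> = N $$ (0, 0) * cofactor N 0 0"
    using assms by (subst sum.lessThan_Suc_shift) (simp add: N_Suc a_def)
  also have "\<dots> = f s * det (mat_delete N 0 0)"
    by (simp add: N_def elim_mat_mult_wronski_mat_row_0 cofactor_def)
  also have "mat_delete N 0 0 = wronski_mat (Suc s) (\<lambda>j. d (f j) - a * f j) k"
    by (rule eq_matI) (use N in \<open>auto simp: mat_delete_def N_Suc wronski_mat_def\<close>)
  finally show ?thesis
    by (simp add: a_def)
qed

fun crum :: "(nat \<Rightarrow> 'a) \<Rightarrow> nat \<Rightarrow> nat \<Rightarrow> 'a" where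
  "crum f 0 = f"
| "crum f (Suc m) = (\<lambda>j. d (crum f m j) - logderiv (crum f m (Suc m)) * crum f m j)"

lemma crum_Suc_eq_mult:
  assumes "crum f m j \<noteq> 0"
  shows "crum f (Suc m) j = crum f m j * (logderiv (crum f m j) - logderiv (crum f m (Suc m)))"
  using assms by (simp add: algebra_simps)

lemma det_wronski_mat_crum:
  assumes "\<And>i. i < k \<Longrightarrow> crum f (m + i) (Suc (m + i)) \<noteq> 0"
  shows "det (wronski_mat (Suc m) (crum f m) k) = (\<Prod>i<k. crum f (m + i) (Suc (m + i)))"
  using assms
proof (induction k arbitrary: m)
  case 0
  then show ?case by (simp add: wronski_mat_def)
next
  case (Suc k)
  have "det (wronski_mat (Suc m) (crum f m) (Suc k))
      = crum f m (Suc m) * det (wronski_mat (Suc (Suc m)) (crum f (Suc m)) k)"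
    using det_wronski_mat_Suc[of "crum f m" "Suc m" k] Suc.prems[of 0] by simp
  also have "det (wronski_mat (Suc (Suc m)) (crum f (Suc m)) k)
      = (\<Prod>i<k. crum f (Suc m + i) (Suc (Suc m + i)))"
    using Suc.IH[of "Suc m"] Suc.prems by fastforce
  also have "crum f m (Suc m) * (\<Prod>i<k. crum f (Suc m + i) (Suc (Suc m + i)))
      = (\<Prod>i<Suc k. crum f (m + i) (Suc (m + i)))"
    by (subst prod.lessThan_Suc_shift) (simp del: crum.simps)
  finally show ?case .
qed

lemma wronskian_eq_prod_crum:
  assumes "\<And>i. i < k \<Longrightarrow> crum f i (Suc i) \<noteq> 0"
  shows "wronskian d f k = (\<Prod>i<k. crum f i (Suc i))"
  using det_wronski_mat_crum[of k f 0] assms by (simp add: wronski_mat_def wronskian_def)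

lemma upsilon_eq_sum_crum:
  assumes "\<And>i. i < k \<Longrightarrow> crum f i (Suc i) \<noteq> 0"
  shows "upsilon d f k = (\<Sum>i<k. logderiv (crum f i (Suc i)))"
proof -
  have "wronskian d f k = (\<Prod>i<k. crum f i (Suc i))"
    by (rule wronskian_eq_prod_crum) (rule assms)
  then show ?thesis
    unfolding upsilon_def by simp (rule logderiv_prod; simp add: assms)
qed

section \<open>Rational functions\<close>

abbreviation poly_z :: "complex poly \<Rightarrow> 'a" where
  "poly_z P \<equiv> poly (map_poly c P) z"

lemma poly_z_pCons [simp]: "poly_z (pCons a P) = c a + z * poly_z P"
  by (simp add: map_poly_pCons)

lemma poly_z_add: "poly_z (P + Q) = poly_z P + poly_z Q"
proof (induction P arbitrary: Q rule: pCons_induct)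
  case (pCons a P)
  show ?case
  proof (cases Q rule: pCons_cases)
    case (pCons b Q')
    then show ?thesis
      using pCons.IH[of Q'] by (simp add: c_add algebra_simps)
  qed
qed simp

lemma poly_z_smult: "poly_z (smult a P) = c a * poly_z P"
  by (induction P rule: pCons_induct) (simp_all add: c_mult algebra_simps)

lemma poly_z_mult: "poly_z (P * Q) = poly_z P * poly_z Q"
  by (induction P rule: pCons_induct) (simp_all add: poly_z_add poly_z_smult algebra_simps)

lemma poly_z_one [simp]: "poly_z 1 = 1"
  by (simp add: one_pCons)

lemma poly_z_diff: "poly_z (P - Q) = poly_z P - poly_z Q"
  using poly_z_add[of "P - Q" Q] by (simp add: algebra_simps)

lemma d_poly_z: "d (poly_z P) = poly_z (pderiv P)"
  by (induction P rule: pCons_induct) (simp_all add: pderiv_pCons poly_z_add)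

lemma is_rational_const: "is_rational c z (c a)"
  unfolding is_rational_def by (rule exI[of _ "[:a:]"], rule exI[of _ 1]) simp

lemma is_rational_of_nat: "is_rational c z (of_nat n)"
  using is_rational_const[of "of_nat n"] by (simp add: c_of_nat)

lemma is_rational_numeral: "is_rational c z (numeral k)"
  using is_rational_of_nat[of "numeral k"] by simp

lemma is_rational_add:
  assumes "is_rational c z f" "is_rational c z g"
  shows "is_rational c z (f + g)"
proof -
  obtain P1 Q1 where 1: "poly_z Q1 \<noteq> 0" "f = poly_z P1 / poly_z Q1"
    using assms(1) unfolding is_rational_def by blast
  obtain P2 Q2 where 2: "poly_z Q2 \<noteq> 0" "g = poly_z P2 / poly_z Q2"
    using assms(2) unfolding is_rational_def by blast
  have "f + g = poly_z (P1 * Q2 + P2 * Q1) / poly_z (Q1 * Q2)"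
    unfolding 1(2) 2(2) using 1(1) 2(1) by (simp add: poly_z_add poly_z_mult field_simps)
  moreover have "poly_z (Q1 * Q2) \<noteq> 0"
    using 1 2 by (simp add: poly_z_mult)
  ultimately show ?thesis
    unfolding is_rational_def by blast
qed

lemma is_rational_mult:
  assumes "is_rational c z f" "is_rational c z g"
  shows "is_rational c z (f * g)"
proof -
  obtain P1 Q1 where 1: "poly_z Q1 \<noteq> 0" "f = poly_z P1 / poly_z Q1"
    using assms(1) unfolding is_rational_def by blast
  obtain P2 Q2 where 2: "poly_z Q2 \<noteq> 0" "g = poly_z P2 / poly_z Q2"
    using assms(2) unfolding is_rational_def by blast
  have "f * g = poly_z (P1 * P2) / poly_z (Q1 * Q2)"
    using 1 2 by (simp add: poly_z_mult)
  moreover have "poly_z (Q1 * Q2) \<noteq> 0"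
    using 1 2 by (simp add: poly_z_mult)
  ultimately show ?thesis
    unfolding is_rational_def by blast
qed

lemma is_rational_diff:
  assumes "is_rational c z f" "is_rational c z g"
  shows "is_rational c z (f - g)"
  using is_rational_add[OF assms(1) is_rational_mult[OF is_rational_const[of "- 1"] assms(2)]]
  by (simp add: c_uminus)

lemma is_rational_divide:
  assumes "is_rational c z f" "is_rational c z g"
  shows "is_rational c z (f / g)"
proof -
  obtain P1 Q1 where 1: "poly_z Q1 \<noteq> 0" "f = poly_z P1 / poly_z Q1"
    using assms(1) unfolding is_rational_def by blast
  obtain P2 Q2 where 2: "poly_z Q2 \<noteq> 0" "g = poly_z P2 / poly_z Q2"
    using assms(2) unfolding is_rational_def by blast
  show ?thesis
  proof (cases "poly_z P2 = 0")
    case True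
    then show ?thesis
      using 2 is_rational_const[of 0] by simp
  next
    case False
    then have "f / g = poly_z (P1 * Q2) / poly_z (Q1 * P2)"
      unfolding 1(2) 2(2) using 1(1) 2(1) by (simp add: poly_z_mult field_simps)
    moreover have "poly_z (Q1 * P2) \<noteq> 0"
      using 1 False by (simp add: poly_z_mult)
    ultimately show ?thesis
      unfolding is_rational_def by blast
  qed
qed

lemma is_rational_d:
  assumes "is_rational c z f"
  shows "is_rational c z (d f)"
proof -
  obtain P Q where 1: "poly_z Q \<noteq> 0" "f = poly_z P / poly_z Q"
    using assms unfolding is_rational_def by blast
  have "d f = poly_z (pderiv P * Q - P * pderiv Q) / poly_z (Q * Q)"
    using 1 by (simp add: d_divide d_poly_z poly_z_diff poly_z_mult power2_eq_square)
  moreover have "poly_z (Q * Q) \<noteq> 0"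
    using 1 by (simp add: poly_z_mult)
  ultimately show ?thesis
    unfolding is_rational_def by blast
qed

lemma is_rational_power2: "is_rational c z f \<Longrightarrow> is_rational c z (f\<^sup>2)"
  by (simp add: power2_eq_square is_rational_mult)

lemma is_rational_sum: "(\<And>i. i \<in> A \<Longrightarrow> is_rational c z (f i)) \<Longrightarrow> is_rational c z (sum f A)"
  by (induction A rule: infinite_finite_induct)
    (auto simp: is_rational_add is_rational_const[of 0, simplified])

lemma is_rational_logderiv: "is_rational c z f \<Longrightarrow> is_rational c z (logderiv f)"
  by (simp add: is_rational_d is_rational_divide)

section \<open>One-step Darboux transformations\<close>

lemma op2_mult_const: "d k = 0 \<Longrightarrow> op2 d p q r (k * y) = k * op2 d p q r y"
  by (simp add: op2_def algebra_simps)

lemma op1_mult_const: "d k = 0 \<Longrightarrow> op1 d b w (k * y) = k * op1 d b w y"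
  by (simp add: op1_def algebra_simps)

lemma op1_op2_commutator:
  assumes "d b = \<beta> * b"
  shows "op1 d b w (op2 d p q r y)
       - op2 d p (q + d p - 2 * p * \<beta>)
           (r + d q + 2 * p * d w + d p * w - p * d \<beta> + p * \<beta>\<^sup>2 - \<beta> * (q + d p)) (op1 d b w y)
     = b * y * d (p * (d w + w\<^sup>2) + q * w + r)"
  unfolding op1_def op2_def by (simp add: assms power2_eq_square algebra_simps)

lemma eigenfunction_riccati:
  assumes "\<psi> \<noteq> 0" "op2 d p q r \<psi> = \<kappa> * \<psi>"
  shows "p * (d (logderiv \<psi>) + (logderiv \<psi>)\<^sup>2) + q * logderiv \<psi> + r = \<kappa>"
proof -
  have "(p * (d (logderiv \<psi>) + (logderiv \<psi>)\<^sup>2) + q * logderiv \<psi> + r) * \<psi> = op2 d p q r \<psi>"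
    using assms(1) by (simp add: op2_def d_divide field_simps power2_eq_square)
  with assms show ?thesis
    by simp
qed

text \<open>The commutator is proportional to the derivative of the Riccati expression, which the
  eigenfunction makes constant.\<close>
lemma darboux_intertwining:
  assumes "\<psi> \<noteq> 0" "op2 d p q r \<psi> = \<kappa> * \<psi>" "d \<kappa> = 0" "b \<noteq> 0"
  defines "w \<equiv> logderiv \<psi>" and "\<beta> \<equiv> logderiv b"
  shows "op1 d b w (op2 d p q r y)
       = op2 d p (q + d p - 2 * p * \<beta>)
           (r + d q + 2 * p * d w + d p * w - p * d \<beta> + p * \<beta>\<^sup>2 - \<beta> * (q + d p)) (op1 d b w y)"
proof -
  have "d b = \<beta> * b"
    using assms(4) by (simp add: \<beta>_def)
  moreover have "d (p * (d w + w\<^sup>2) + q * w + r) = 0"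
    using eigenfunction_riccati[OF assms(1,2)] assms(3) by (simp add: w_def)
  ultimately show ?thesis
    using op1_op2_commutator[of b \<beta> w p q r y] by simp
qed

lemma intertwined_eigenfunction:
  assumes "\<forall>y. op1 d b w (op2 d p q r y) = op2 d p q' r' (op1 d b w y)"
    and "d \<mu> = 0" "op2 d p q r y = \<mu> * y"
  shows "op2 d p q' r' (op1 d b w y) = \<mu> * op1 d b w y"
  using assms op1_mult_const[of \<mu> b w y] by metis

lemma op1_logderiv_eq_0_imp:
  assumes "\<psi> \<noteq> 0" "b \<noteq> 0" "op1 d b (logderiv \<psi>) y = 0"
  shows "d (y / \<psi>) = 0"
proof -
  have "d y = logderiv \<psi> * y"
    using assms(2,3) by (simp add: op1_def)
  with assms(1) show ?thesis
    by (simp add: d_divide)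
qed

text \<open>The kernel of b (D - \<psi>'/\<psi>) consists of the constant multiples of \<psi>.\<close>
lemma eigenfunction_op1_neq_0:
  assumes "\<psi> \<noteq> 0" "op2 d p q r \<psi> = \<kappa> * \<psi>" "b \<noteq> 0"
    and "y \<noteq> 0" "op2 d p q r y = \<mu> * y" "\<mu> \<noteq> \<kappa>"
  shows "op1 d b (logderiv \<psi>) y \<noteq> 0"
proof
  assume "op1 d b (logderiv \<psi>) y = 0"
  then have const: "d (y / \<psi>) = 0"
    by (rule op1_logderiv_eq_0_imp[OF assms(1,3)])
  have "\<mu> * y = (y / \<psi>) * op2 d p q r \<psi>"
    using op2_mult_const[OF const, of p q r \<psi>] assms(1,5) by simp
  also have "\<dots> = \<kappa> * y"
    using assms(1,2) by simp
  finally show False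
    using assms(4,6) by simp
qed

lemma sigma_Suc: "sigma d b (Suc m) = sigma d b m + logderiv (b (Suc m))"
  by (simp add: sigma_def)

lemma qk_Suc: "qk d p q0 b (Suc m) = qk d p q0 b m + d p - 2 * p * logderiv (b (Suc m))"
  by (simp add: qk_def sigma_Suc algebra_simps)

lemma rk_Suc:
  "rk d p q0 r0 b f (Suc m)
     = rk d p q0 r0 b f m + d (qk d p q0 b m) + 2 * p * d (wk d b f (Suc m))
       + d p * wk d b f (Suc m) - p * d (logderiv (b (Suc m))) + p * (logderiv (b (Suc m)))\<^sup>2
       - logderiv (b (Suc m)) * (qk d p q0 b m + d p)"
proof -
  have "(2 :: 'a) \<noteq> 0"
    using of_nat_eq_0_iff[of 2] by simp
  then have "(1/2) * 2 = (1 :: 'a)"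
    by simp
  moreover have "h * of_nat (Suc m) * (of_nat (Suc m) - 1)
      = h * of_nat m * (of_nat m - 1) + (h * 2) * (of_nat m :: 'a)" for h
    by (simp add: algebra_simps)
  ultimately have triangular: "(1/2) * of_nat (Suc m) * (of_nat (Suc m) - 1)
      = (1/2) * of_nat m * (of_nat m - 1) + (of_nat m :: 'a)"
    by (metis mult_1)
  show ?thesis
    unfolding rk_def triangular unfolding wk_def qk_def sigma_Suc
    by (simp add: algebra_simps power2_eq_square)
qed

end

section \<open>Crum's construction\<close>

locale crum_darboux = diff_field +
  fixes p q0 r0 :: 'a and phi b :: "nat \<Rightarrow> 'a" and lam :: "nat \<Rightarrow> complex" and n :: nat
  assumes is_rational_p: "is_rational c z p"
    and is_rational_q0: "is_rational c z q0"
    and is_rational_r0: "is_rational c z r0"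
    and quasi_rational_phi: "\<forall>k\<in>{1..n}. quasi_rational d c z (phi k)"
    and eigen_phi: "\<forall>k\<in>{1..n}. op2 d p q0 r0 (phi k) = c (lam k) * phi k"
    and inj_lam: "inj_on lam {1..n}"
    and is_rational_b: "\<forall>k\<in>{1..n}. is_rational c z (b k) \<and> b k \<noteq> 0"
begin

abbreviation T :: "nat \<Rightarrow> 'a \<Rightarrow> 'a" where
  "T m \<equiv> op2 d p (qk d p q0 b m) (rk d p q0 r0 b phi m)"

abbreviation A :: "nat \<Rightarrow> 'a \<Rightarrow> 'a" where
  "A k \<equiv> op1 d (b k) (wk d b phi k)"

abbreviation bprod :: "nat \<Rightarrow> 'a" where
  "bprod m \<equiv> \<Prod>i\<in>{1..m}. b i"

abbreviation psi :: "nat \<Rightarrow> nat \<Rightarrow> 'a" where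
  "psi m j \<equiv> bprod m * crum phi m j"

definition eigen_level :: "nat \<Rightarrow> bool" where
  "eigen_level m \<longleftrightarrow>
     (\<forall>j\<in>{Suc m..n}. crum phi m j \<noteq> 0 \<and> T m (psi m j) = c (lam j) * psi m j)"

lemma bprod_neq_0: "m \<le> n \<Longrightarrow> bprod m \<noteq> 0"
  using is_rational_b by (simp add: prod_zero_iff)

lemma d_bprod: "m \<le> n \<Longrightarrow> d (bprod m) = sigma d b m * bprod m"
proof (induction m)
  case (Suc m)
  have "b (Suc m) \<noteq> 0"
    using is_rational_b Suc.prems by auto
  with Suc bprod_neq_0[of m] show ?case
    by (simp add: sigma_Suc field_simps)
qed (simp add: sigma_def)

lemma logderiv_psi:
  assumes "m \<le> n" "crum phi m j \<noteq> 0"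
  shows "logderiv (psi m j) = sigma d b m + logderiv (crum phi m j)"
proof -
  have "logderiv (psi m j) = logderiv (bprod m) + logderiv (crum phi m j)"
    using assms bprod_neq_0 by (intro logderiv_mult) auto
  with assms show ?thesis
    using bprod_neq_0[of m] d_bprod[of m] by simp
qed

lemma wk_Suc_eq_logderiv_psi:
  assumes "m < n" "\<And>i. i \<le> m \<Longrightarrow> crum phi i (Suc i) \<noteq> 0"
  shows "wk d b phi (Suc m) = logderiv (psi m (Suc m))"
proof -
  have "upsilon d phi (Suc m) = upsilon d phi m + logderiv (crum phi m (Suc m))"
    using upsilon_eq_sum_crum[of "Suc m" phi] upsilon_eq_sum_crum[of m phi] assms(2) by simp
  then show ?thesis
    using logderiv_psi[of m "Suc m"] assms by (simp add: wk_def)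
qed

lemma A_psi:
  assumes "m < n" "\<And>i. i \<le> m \<Longrightarrow> crum phi i (Suc i) \<noteq> 0"
  shows "A (Suc m) (psi m j) = psi (Suc m) j"
proof -
  have "d (psi m j) - logderiv (psi m (Suc m)) * psi m j = bprod m * crum phi (Suc m) j"
    using assms logderiv_psi[of m "Suc m"] d_bprod[of m] by (simp add: algebra_simps)
  then show ?thesis
    using wk_Suc_eq_logderiv_psi[OF assms] by (simp add: op1_def algebra_simps del: crum.simps)
qed

lemma eigen_level_0: "eigen_level 0"
proof -
  have "upsilon d phi 0 = 0"
    by (simp add: upsilon_def wronskian_def)
  then show ?thesis
    using eigen_phi quasi_rational_phi
    by (auto simp: eigen_level_def quasi_rational_def qk_def rk_def sigma_def)
qed

lemma crum_diagonal_neq_0: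
  assumes "m < n" "\<And>i. i \<le> m \<Longrightarrow> eigen_level i" "i \<le> m"
  shows "crum phi i (Suc i) \<noteq> 0"
  using assms by (auto simp: eigen_level_def)

lemma darboux_step:
  assumes "m < n" "\<And>i. i \<le> m \<Longrightarrow> eigen_level i"
  shows "A (Suc m) (T m y) = T (Suc m) (A (Suc m) y)"
proof -
  note crum_nz = crum_diagonal_neq_0[OF assms]
  have "psi m (Suc m) \<noteq> 0"
    using assms(1) bprod_neq_0[of m] crum_nz[of m] by simp
  moreover have "T m (psi m (Suc m)) = c (lam (Suc m)) * psi m (Suc m)"
    using assms by (simp add: eigen_level_def)
  moreover have "b (Suc m) \<noteq> 0"
    using assms(1) is_rational_b by simp
  ultimately show ?thesis
    using darboux_intertwining[of "psi m (Suc m)" p "qk d p q0 b m" "rk d p q0 r0 b phi m"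
        "c (lam (Suc m))" "b (Suc m)" y]
    by (simp add: wk_Suc_eq_logderiv_psi[OF assms(1) crum_nz] qk_Suc rk_Suc del: crum.simps)
qed

lemma eigen_level_Suc:
  assumes "m < n" "\<And>i. i \<le> m \<Longrightarrow> eigen_level i"
  shows "eigen_level (Suc m)"
  unfolding eigen_level_def
proof
  fix j
  assume j: "j \<in> {Suc (Suc m)..n}"
  note crum_nz = crum_diagonal_neq_0[OF assms]
  have eigen_m: "T m (psi m j) = c (lam j) * psi m j" "crum phi m j \<noteq> 0"
    "T m (psi m (Suc m)) = c (lam (Suc m)) * psi m (Suc m)"
    using assms j by (auto simp: eigen_level_def)
  have psi_Suc: "psi (Suc m) j = A (Suc m) (psi m j)"
    using A_psi[OF assms(1) crum_nz] by simp
  have "lam j \<noteq> lam (Suc m)"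
    using inj_lam j assms(1) by (auto dest: inj_onD)
  then have "c (lam j) \<noteq> c (lam (Suc m))"
    using c_inj by blast
  moreover have "psi m (Suc m) \<noteq> 0" "psi m j \<noteq> 0" "b (Suc m) \<noteq> 0"
    using assms(1) bprod_neq_0[of m] crum_nz[of m] eigen_m(2) is_rational_b by auto
  ultimately have "op1 d (b (Suc m)) (logderiv (psi m (Suc m))) (psi m j) \<noteq> 0"
    using eigenfunction_op1_neq_0 eigen_m(1,3) by metis
  then have "psi (Suc m) j \<noteq> 0"
    using psi_Suc wk_Suc_eq_logderiv_psi[OF assms(1) crum_nz] by (simp del: crum.simps)
  moreover have "T (Suc m) (psi (Suc m) j) = c (lam j) * psi (Suc m) j"
    unfolding psi_Suc using darboux_step[OF assms] eigen_m(1) by (intro intertwined_eigenfunction) simp_all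
  ultimately show "crum phi (Suc m) j \<noteq> 0 \<and>
      T (Suc m) (psi (Suc m) j) = c (lam j) * psi (Suc m) j"
    by (simp del: crum.simps)
qed

lemma eigen_level: "m \<le> n \<Longrightarrow> eigen_level m"
proof (induction m rule: less_induct)
  case (less m)
  show ?case
  proof (cases m)
    case 0
    then show ?thesis by (simp add: eigen_level_0)
  next
    case (Suc k)
    have "eigen_level (Suc k)"
      using less Suc by (intro eigen_level_Suc) auto
    with Suc show ?thesis
      by simp
  qed
qed

lemma is_rational_logderiv_crum:
  "m \<le> n \<Longrightarrow> j \<in> {Suc m..n} \<Longrightarrow> is_rational c z (logderiv (crum phi m j))"
proof (induction m arbitrary: j)
  case 0
  then show ?case
    using quasi_rational_phi by (auto simp: quasi_rational_def)
next
  case (Suc m)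
  define v where "v = logderiv (crum phi m j) - logderiv (crum phi m (Suc m))"
  have crum_nz: "crum phi m j \<noteq> 0" "crum phi (Suc m) j \<noteq> 0"
    using eigen_level[of m] eigen_level[of "Suc m"] Suc.prems by (auto simp: eigen_level_def)
  have crum_Suc: "crum phi (Suc m) j = crum phi m j * v"
    unfolding v_def by (rule crum_Suc_eq_mult[OF crum_nz(1)])
  have "v \<noteq> 0"
    using crum_nz(2) crum_Suc by (simp del: crum.simps)
  then have "logderiv (crum phi (Suc m) j) = logderiv (crum phi m j) + logderiv v"
    unfolding crum_Suc by (rule logderiv_mult[OF crum_nz(1)])
  moreover have "is_rational c z v"
    unfolding v_def using Suc by (intro is_rational_diff) auto
  ultimately show ?case
    using Suc by (simp add: is_rational_add is_rational_logderiv)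
qed

lemma is_rational_upsilon: "m \<le> n \<Longrightarrow> is_rational c z (upsilon d phi m)"
  using upsilon_eq_sum_crum[of m phi] eigen_level is_rational_logderiv_crum
  by (auto simp: eigen_level_def intro!: is_rational_sum)

lemma is_rational_sigma: "m \<le> n \<Longrightarrow> is_rational c z (sigma d b m)"
  unfolding sigma_def using is_rational_b
  by (intro is_rational_sum is_rational_logderiv) auto

theorem rational_darboux_chain:
  "\<forall>k\<in>{1..n}.
     is_rational c z (qk d p q0 b k) \<and> is_rational c z (rk d p q0 r0 b phi k) \<and>
     is_rational c z (wk d b phi k) \<and> (\<forall>y. A k (T (k - 1) y) = T k (A k y))"
proof
  fix k
  assume k: "k \<in> {1..n}"
  have rat: "is_rational c z (sigma d b k)" "is_rational c z (sigma d b (k - 1))"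
    "is_rational c z (upsilon d phi k)" "is_rational c z (upsilon d phi (k - 1))"
    using k is_rational_sigma is_rational_upsilon by auto
  note closure = is_rational_add is_rational_diff is_rational_mult is_rational_d
    is_rational_power2 is_rational_of_nat is_rational_numeral is_rational_divide
    is_rational_const[of 1, simplified]
  have "is_rational c z (qk d p q0 b k)"
    unfolding qk_def using rat is_rational_p is_rational_q0 by (intro closure) auto
  moreover have "is_rational c z (rk d p q0 r0 b phi k)"
    unfolding rk_def using rat is_rational_p is_rational_q0 is_rational_r0 by (intro closure) auto
  moreover have "is_rational c z (wk d b phi k)"
    unfolding wk_def using rat by (intro closure) auto
  moreover have "A k (T (k - 1) y) = T k (A k y)" for y
    using darboux_step[of "k - 1" y] eigen_level k by (cases k) auto
  ultimately show "is_rational c z (qk d p q0 b k) \<and> is_rational c z (rk d p q0 r0 b phi k) \<and>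
      is_rational c z (wk d b phi k) \<and> (\<forall>y. A k (T (k - 1) y) = T k (A k y))"
    by blast
qed

end

theorem mainTheorem3:
  fixes d :: "'a::field \<Rightarrow> 'a" and c :: "complex \<Rightarrow> 'a" and z :: 'a
    and p q0 r0 :: 'a and phi b :: "nat \<Rightarrow> 'a" and lam :: "nat \<Rightarrow> complex" and n :: nat
  assumes "diff_field_over d c z"
    and "is_rational c z p" and "p \<noteq> 0" and "is_rational c z q0" and "is_rational c z r0"
    and "\<forall>k\<in>{1..n}. quasi_rational d c z (phi k)"
    and "\<forall>k\<in>{1..n}. op2 d p q0 r0 (phi k) = c (lam k) * phi k"
    and "inj_on lam {1..n}"
    and "\<forall>k\<in>{1..n}. is_rational c z (b k) \<and> b k \<noteq> 0"
  shows "\<forall>k\<in>{1..n}.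
           is_rational c z (qk d p q0 b k) \<and> is_rational c z (rk d p q0 r0 b phi k) \<and>
           is_rational c z (wk d b phi k) \<and>
           (\<forall>y. op1 d (b k) (wk d b phi k) (op2 d p (qk d p q0 b (k - 1)) (rk d p q0 r0 b phi (k - 1)) y)
              = op2 d p (qk d p q0 b k) (rk d p q0 r0 b phi k) (op1 d (b k) (wk d b phi k) y))"
proof -
  interpret crum_darboux d c z p q0 r0 phi b lam n
    using assms by unfold_locales (simp_all add: diff_field_def)
  show ?thesis
    by (rule rational_darboux_chain)
qed

end
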